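(* Let $\mathbb{F}$ be a finite field. For every $k\in\mathbb{N}$ there exists a CMSO formula $\mathrm{Dep}(X,\langle Y^1\rangle,\dots,\langle Y^k\rangle)$ over $\Sigma_{\mathbb{F}}$ such that for every matrix $A$ over $\mathbb{F}$, every set $S$ of columns of $A$ and all virtual columns $\langle Q^1\rangle,\dots,\langle Q^k\rangle$ of $\mathcal{S}(A)$, the set $S$ is linearly dependent with respect to $v(\langle Q^1\rangle),\dots,v(\langle Q^k\rangle)$ if and only if $\mathcal{S}(A)\models\mathrm{Dep}(S,\langle Q^1\rangle,\dots,\langle Q^k\rangle)$.
   Context: $\Sigma_{\mathbb{F}}$ has unary symbols $R,C$ and binary symbols $\mathrm{Entry}_\alpha$ ($\alpha\in\mathbb{F}$). For a matrix $A$ with rows $r_1,\dots,r_m$, $\mathcal{S}(A)$ has universe rows $\cup$ columns, $R$ = rows, $C$ = columns, $\mathrm{Entry}_\alpha=\{(r,c):A(r,c)=\alpha\}$. CMSO is monadic second-order logic with predicates $\mathrm{mod}_{a,b}(X)$ meaning $|X|\equiv a\pmod b$. A virtual column is a family $\langle Q\rangle=\{Q_\alpha\}_{\alpha\in\mathbb{F}}$ of pairwise disjoint sets of rows covering all rows, with vector $v(\langle Q\rangle)\in\mathbb{F}^m$ whose $i$-th coordinate is $\alpha$ where $r_i\in Q_\alpha$; in formulas it is an $\mathbb{F}$-indexed tuple of set variables. A set $\{u_1,\dots,u_\ell\}$ of columns (vectors of $\mathbb{F}^m$) is dependent with respect to $v_1,\dots,v_k\in\mathbb{F}^m$ if there exist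 $\alpha_1,\dots,\alpha_\ell\in\mathbb{F}$, not all $0$, with $\sum_i\alpha_iu_i\in\mathrm{span}(v_1,\dots,v_k)$. *)

theory Defs
  imports Main
begin

datatype elem = Row nat | Col nat

record ('u, 'f) sigma_struct =
  univ :: "'u set"
  relR :: "'u set"
  relC :: "'u set"
  relEntry :: "'f \<Rightarrow> ('u \<times> 'u) set"

datatype ('f, 'v) cmso =
    AtR nat
  | AtC nat
  | AtEntry 'f nat nat
  | AtEq nat nat
  | AtMem nat 'v
  | AtMod nat nat 'v
  | FFalse
  | Neg "('f, 'v) cmso"
  | Conj "('f, 'v) cmso" "('f, 'v) cmso"
  | Disj "('f, 'v) cmso" "('f, 'v) cmso"
  | Ex1 nat "('f, 'v) cmso"
  | All1 nat "('f, 'v) cmso"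
  | ExS 'v "('f, 'v) cmso"
  | AllS 'v "('f, 'v) cmso"

fun sat :: "('u, 'f) sigma_struct \<Rightarrow> (nat \<Rightarrow> 'u) \<Rightarrow> ('v \<Rightarrow> 'u set) \<Rightarrow> ('f, 'v) cmso \<Rightarrow> bool" where
  "sat M \<nu> \<sigma> (AtR x) = (\<nu> x \<in> relR M)"
| "sat M \<nu> \<sigma> (AtC x) = (\<nu> x \<in> relC M)"
| "sat M \<nu> \<sigma> (AtEntry \<alpha> x y) = ((\<nu> x, \<nu> y) \<in> relEntry M \<alpha>)"
| "sat M \<nu> \<sigma> (AtEq x y) = (\<nu> x = \<nu> y)"
| "sat M \<nu> \<sigma> (AtMem x X) = (\<nu> x \<in> \<sigma> X)"
| "sat M \<nu> \<sigma> (AtMod a b X) = (card (\<sigma> X) mod b = a mod b)"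
| "sat M \<nu> \<sigma> FFalse = False"
| "sat M \<nu> \<sigma> (Neg \<phi>) = (\<not> sat M \<nu> \<sigma> \<phi>)"
| "sat M \<nu> \<sigma> (Conj \<phi> \<psi>) = (sat M \<nu> \<sigma> \<phi> \<and> sat M \<nu> \<sigma> \<psi>)"
| "sat M \<nu> \<sigma> (Disj \<phi> \<psi>) = (sat M \<nu> \<sigma> \<phi> \<or> sat M \<nu> \<sigma> \<psi>)"
| "sat M \<nu> \<sigma> (Ex1 x \<phi>) = (\<exists>a\<in>univ M. sat M (\<nu>(x := a)) \<sigma> \<phi>)"
| "sat M \<nu> \<sigma> (All1 x \<phi>) = (\<forall>a\<in>univ M. sat M (\<nu>(x := a)) \<sigma> \<phi>)"
| "sat M \<nu> \<sigma> (ExS X \<phi>) = (\<exists>B. B \<subseteq> univ M \<and> sat M \<nu> (\<sigma>(X := B)) \<phi>)"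
| "sat M \<nu> \<sigma> (AllS X \<phi>) = (\<forall>B. B \<subseteq> univ M \<longrightarrow> sat M \<nu> (\<sigma>(X := B)) \<phi>)"

definition matrix_struct :: "nat \<Rightarrow> nat \<Rightarrow> (nat \<Rightarrow> nat \<Rightarrow> 'f) \<Rightarrow> (elem, 'f) sigma_struct" where
  "matrix_struct m n A =
     \<lparr> univ = Row ` {..<m} \<union> Col ` {..<n},
       relR = Row ` {..<m},
       relC = Col ` {..<n},
       relEntry = (\<lambda>\<alpha>. {(Row r, Col c) | r c. r < m \<and> c < n \<and> A r c = \<alpha>}) \<rparr>"

definition virtual_column :: "nat \<Rightarrow> ('f \<Rightarrow> elem set) \<Rightarrow> bool" where
  "virtual_column m Q \<longleftrightarrow>
     (\<forall>\<alpha>. Q \<alpha> \<subseteq> Row ` {..<m}) \<and>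
     (\<forall>\<alpha> \<beta>. \<alpha> \<noteq> \<beta> \<longrightarrow> Q \<alpha> \<inter> Q \<beta> = {}) \<and>
     (\<Union>\<alpha>. Q \<alpha>) = Row ` {..<m}"

definition vvec :: "('f \<Rightarrow> elem set) \<Rightarrow> nat \<Rightarrow> 'f" where
  "vvec Q r = (THE \<alpha>. Row r \<in> Q \<alpha>)"

definition dependent_wrt ::
  "nat \<Rightarrow> (nat \<Rightarrow> nat \<Rightarrow> 'f::field) \<Rightarrow> nat set \<Rightarrow> (nat \<Rightarrow> nat \<Rightarrow> 'f) \<Rightarrow> nat \<Rightarrow> bool" where
  "dependent_wrt m A S v k \<longleftrightarrow>
     (\<exists>a :: nat \<Rightarrow> 'f. (\<exists>c\<in>S. a c \<noteq> 0) \<and>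
        (\<exists>b :: nat \<Rightarrow> 'f. \<forall>r<m. (\<Sum>c\<in>S. a c * A r c) = (\<Sum>i<k. b i * v i r)))"

text \<open>Names of the free set variables of Dep: X and the F-indexed tuples Y^i.\<close>
datatype 'f svar = SX | SY nat 'f | SB nat

end

theory Submission
  imports Defs "HOL-Library.Countable" "HOL-Library.Disjoint_Sets" "HOL-Number_Theory.Cong"
begin

text \<open>
  Dep guesses the coefficients of the combination by a partition of X into set variables
  B(\<alpha>), one for each \<alpha> in F, with some B(\<alpha>) for \<alpha> \<noteq> 0 nonempty. In row r the combination
  evaluates to the sum of \<alpha> \<beta> N(\<alpha>, \<beta>) over all \<alpha>, \<beta> in F, where N(\<alpha>, \<beta>) counts the columns of B(\<alpha>)
  with entry \<beta> in row r. As an element of F this count only matters modulo the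
  characteristic, which the modular counting predicates can express. The coefficients of the
  span and the entries of the virtual columns in row r range over the finite field, so they are
  guessed by finite disjunctions.
\<close>

lemma sum_by_fibres:
  fixes p :: "'a \<Rightarrow> 'b::finite" and h :: "'b \<Rightarrow> 'r::semiring_1"
  assumes "finite S"
  shows "(\<Sum>c\<in>S. h (p c)) = (\<Sum>z\<in>UNIV. h z * of_nat (card {c \<in> S. p c = z}))"
proof -
  have "(\<Sum>c\<in>S. h (p c)) = (\<Sum>z\<in>UNIV. \<Sum>c\<in>{c \<in> S. p c = z}. h (p c))"
    using sum.group[OF assms finite_UNIV, of p "h \<circ> p"] by simp
  also have "\<dots> = (\<Sum>z\<in>UNIV. h z * of_nat (card {c \<in> S. p c = z}))"
    by (intro sum.cong) (simp_all add: mult_of_nat_commute)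
  finally show ?thesis .
qed

lemma disjoint_family_Union_eq_image_iff:
  assumes "inj_on f S"
  shows "disjoint_family B \<and> (\<Union>\<alpha>. B \<alpha>) = f ` S \<longleftrightarrow> (\<exists>a. B = (\<lambda>\<alpha>. f ` {c \<in> S. a c = \<alpha>}))"
proof
  assume "disjoint_family B \<and> (\<Union>\<alpha>. B \<alpha>) = f ` S"
  then have disjoint: "disjoint_family B" and cover: "(\<Union>\<alpha>. B \<alpha>) = f ` S"
    by auto
  define a where "a c = (SOME \<alpha>. f c \<in> B \<alpha>)" for c
  have a: "f c \<in> B (a c)" if "c \<in> S" for c
    unfolding a_def by (rule someI_ex) (use cover that in blast)
  have "B \<alpha> = f ` {c \<in> S. a c = \<alpha>}" for \<alpha>
  proof
    show "B \<alpha> \<subseteq> f ` {c \<in> S. a c = \<alpha>}"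
    proof
      fix x assume "x \<in> B \<alpha>"
      then obtain c where c: "c \<in> S" "x = f c"
        using cover by blast
      have "a c = \<alpha>"
        using disjoint a[OF c(1)] \<open>x \<in> B \<alpha>\<close> c(2) unfolding disjoint_family_on_def by blast
      then show "x \<in> f ` {c \<in> S. a c = \<alpha>}"
        using c by blast
    qed
    show "f ` {c \<in> S. a c = \<alpha>} \<subseteq> B \<alpha>"
      using a by auto
  qed
  then show "\<exists>a. B = (\<lambda>\<alpha>. f ` {c \<in> S. a c = \<alpha>})"
    by blast
next
  assume "\<exists>a. B = (\<lambda>\<alpha>. f ` {c \<in> S. a c = \<alpha>})"
  then show "disjoint_family B \<and> (\<Union>\<alpha>. B \<alpha>) = f ` S"
    by (auto simp: disjoint_family_on_def dest: inj_onD[OF assms])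
qed

lemma finite_lists_length: "finite {xs :: 'a::finite list. length xs = k}"
  using finite_lists_length_eq[of "UNIV :: 'a set" k] by simp

lemma ex_length_eq_iff_map: "(\<exists>xs. length xs = k \<and> P xs) \<longleftrightarrow> (\<exists>f. P (map f [0..<k]))"
  by (metis length_map map_nth diff_zero length_upt)

lemma ex_nth_eq_iff_map:
  "(\<exists>xs. length xs = k \<and> (\<forall>i<k. xs ! i = f i) \<and> P xs) \<longleftrightarrow> P (map f [0..<k])"
  by (metis (no_types, lifting) add_0 diff_zero length_map length_upt nth_equalityI nth_map_upt)

definition Disjs :: "'i set \<Rightarrow> ('i \<Rightarrow> ('f, 'v) cmso) \<Rightarrow> ('f, 'v) cmso" where
  "Disjs I \<phi> = foldr (\<lambda>i. Disj (\<phi> i)) (SOME xs. set xs = I) FFalse"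

definition Conjs :: "'i set \<Rightarrow> ('i \<Rightarrow> ('f, 'v) cmso) \<Rightarrow> ('f, 'v) cmso" where
  "Conjs I \<phi> = Neg (Disjs I (\<lambda>i. Neg (\<phi> i)))"

definition ExSs :: "'v set \<Rightarrow> ('f, 'v) cmso \<Rightarrow> ('f, 'v) cmso" where
  "ExSs V \<phi> = foldr ExS (SOME vs. set vs = V) \<phi>"

abbreviation Imp :: "('f, 'v) cmso \<Rightarrow> ('f, 'v) cmso \<Rightarrow> ('f, 'v) cmso" where
  "Imp \<phi> \<psi> \<equiv> Disj (Neg \<phi>) \<psi>"

abbreviation Iff :: "('f, 'v) cmso \<Rightarrow> ('f, 'v) cmso \<Rightarrow> ('f, 'v) cmso" where
  "Iff \<phi> \<psi> \<equiv> Conj (Imp \<phi> \<psi>) (Imp \<psi> \<phi>)"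

lemma sat_foldr_Disj:
  "sat M \<nu> \<sigma> (foldr (\<lambda>i. Disj (\<phi> i)) xs FFalse) \<longleftrightarrow> (\<exists>i\<in>set xs. sat M \<nu> \<sigma> (\<phi> i))"
  by (induction xs) auto

lemma sat_Disjs:
  assumes "finite I"
  shows "sat M \<nu> \<sigma> (Disjs I \<phi>) \<longleftrightarrow> (\<exists>i\<in>I. sat M \<nu> \<sigma> (\<phi> i))"
proof -
  have "set (SOME xs. set xs = I) = I"
    using finite_list[OF assms] by (rule someI_ex)
  then show ?thesis
    unfolding Disjs_def sat_foldr_Disj by simp
qed

lemma sat_Conjs:
  assumes "finite I"
  shows "sat M \<nu> \<sigma> (Conjs I \<phi>) \<longleftrightarrow> (\<forall>i\<in>I. sat M \<nu> \<sigma> (\<phi> i))"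
  using assms by (simp add: Conjs_def sat_Disjs)

lemma sat_foldr_ExS:
  "sat M \<nu> \<sigma> (foldr ExS vs \<phi>) \<longleftrightarrow>
     (\<exists>B. (\<forall>v\<in>set vs. B v \<subseteq> univ M) \<and> sat M \<nu> (override_on \<sigma> B (set vs)) \<phi>)"
proof (induction vs arbitrary: \<sigma>)
  case Nil
  then show ?case by simp
next
  case (Cons v vs)
  have shift: "override_on (\<sigma>(v := B0)) B (set vs) =
      override_on \<sigma> (override_on (\<lambda>_. B0) B (set vs)) (set (v # vs))" for B0 B
    by (auto simp: override_on_def fun_eq_iff)
  have unshift: "override_on (\<sigma>(v := B v)) B (set vs) = override_on \<sigma> B (insert v (set vs))" for B
    by (auto simp: override_on_def fun_eq_iff)
  show ?case
  proof
    assume "sat M \<nu> \<sigma> (foldr ExS (v # vs) \<phi>)"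
    then obtain B0 where "B0 \<subseteq> univ M" "sat M \<nu> (\<sigma>(v := B0)) (foldr ExS vs \<phi>)"
      by auto
    moreover from this(2) obtain B where "\<forall>u\<in>set vs. B u \<subseteq> univ M"
      "sat M \<nu> (override_on (\<sigma>(v := B0)) B (set vs)) \<phi>"
      unfolding Cons.IH by blast
    ultimately
    show "\<exists>B. (\<forall>u\<in>set (v # vs). B u \<subseteq> univ M) \<and> sat M \<nu> (override_on \<sigma> B (set (v # vs))) \<phi>"
      unfolding shift by (intro exI[of _ "override_on (\<lambda>_. B0) B (set vs)"]) (auto simp: override_on_def)
  next
    assume "\<exists>B. (\<forall>u\<in>set (v # vs). B u \<subseteq> univ M) \<and> sat M \<nu> (override_on \<sigma> B (set (v # vs))) \<phi>"
    then obtain B where "\<forall>u\<in>set (v # vs). B u \<subseteq> univ M" "sat M \<nu> (override_on \<sigma> B (set (v # vs))) \<phi>"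
      by blast
    then have "sat M \<nu> (\<sigma>(v := B v)) (foldr ExS vs \<phi>)"
      unfolding Cons.IH by (intro exI[of _ B]) (auto simp: unshift)
    with \<open>\<forall>u\<in>set (v # vs). B u \<subseteq> univ M\<close> show "sat M \<nu> \<sigma> (foldr ExS (v # vs) \<phi>)"
      by auto
  qed
qed

lemma sat_ExSs:
  assumes "finite V"
  shows "sat M \<nu> \<sigma> (ExSs V \<phi>) \<longleftrightarrow>
           (\<exists>B. (\<forall>v\<in>V. B v \<subseteq> univ M) \<and> sat M \<nu> (override_on \<sigma> B V) \<phi>)"
proof -
  have "set (SOME vs. set vs = V) = V"
    using finite_list[OF assms] by (rule someI_ex)
  then show ?thesis
    unfolding ExSs_def sat_foldr_ExS by simp
qed

lemma sat_ExSs_range: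
  fixes g :: "'a::finite \<Rightarrow> 'v"
  assumes "inj g"
  shows "sat M \<nu> \<sigma> (ExSs (range g) \<phi>) \<longleftrightarrow>
           (\<exists>B. (\<forall>a. B a \<subseteq> univ M) \<and> sat M \<nu> (override_on \<sigma> (B \<circ> inv g) (range g)) \<phi>)"
  unfolding sat_ExSs[OF finite_imageI[OF finite_UNIV]]
proof safe
  fix B' assume "\<forall>v\<in>range g. B' v \<subseteq> univ M" "sat M \<nu> (override_on \<sigma> B' (range g)) \<phi>"
  moreover have "override_on \<sigma> (B' \<circ> g \<circ> inv g) (range g) = override_on \<sigma> B' (range g)"
    by (auto simp: override_on_def fun_eq_iff inv_f_f[OF assms])
  ultimately show "\<exists>B. (\<forall>a. B a \<subseteq> univ M) \<and> sat M \<nu> (override_on \<sigma> (B \<circ> inv g) (range g)) \<phi>"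
    by (intro exI[of _ "B' \<circ> g"]) auto
next
  fix B assume "\<forall>a. B a \<subseteq> univ M" "sat M \<nu> (override_on \<sigma> (B \<circ> inv g) (range g)) \<phi>"
  then show "\<exists>B'. (\<forall>v\<in>range g. B' v \<subseteq> univ M) \<and> sat M \<nu> (override_on \<sigma> B' (range g)) \<phi>"
    by (intro exI[of _ "B \<circ> inv g"]) (auto simp: inv_f_f[OF assms])
qed

definition card_eq_formula :: "'v \<Rightarrow> 'r::{finite,semiring_1_cancel} \<Rightarrow> ('f, 'v) cmso" where
  "card_eq_formula Z e = Disjs {j. j < CHAR('r) \<and> of_nat j = e} (\<lambda>j. AtMod j CHAR('r) Z)"

lemma sat_card_eq_formula:
  "sat M \<nu> \<sigma> (card_eq_formula Z e) \<longleftrightarrow> of_nat (card (\<sigma> Z)) = (e :: 'r::{finite,semiring_1_cancel})"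
proof -
  have "0 < CHAR('r)"
    by (rule finite_imp_CHAR_pos) simp
  then show ?thesis
    unfolding card_eq_formula_def
    by (auto simp: sat_Disjs of_nat_eq_iff_cong_CHAR cong_def intro!: exI[of _ "card (\<sigma> Z) mod CHAR('r)"])
qed

text \<open>
  The set variable SB 0 is scratch space for count_formula. The first-order variable 0
  ranges over rows and 1 over columns.
\<close>

definition block :: "'f::countable \<Rightarrow> 'f svar" where
  "block \<alpha> = SB (Suc (to_nat \<alpha>))"

lemma inj_block: "inj block"
  by (auto simp: block_def inj_def)

lemma block_neq_SB_0 [simp]: "block \<alpha> \<noteq> SB 0"
  by (simp add: block_def)

lemma not_in_range_block [simp]: "SX \<notin> range block" "SY i \<gamma> \<notin> range block"
  by (auto simp: block_def)

definition count_formula :: "'f::{finite,field} \<Rightarrow> 'f \<Rightarrow> 'f \<Rightarrow> ('f, 'f svar) cmso" where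
  "count_formula \<alpha> \<beta> e =
     ExS (SB 0) (Conj (All1 1 (Iff (AtMem 1 (SB 0)) (Conj (AtMem 1 (block \<alpha>)) (AtEntry \<beta> 0 1))))
                      (card_eq_formula (SB 0) e))"

lemma sat_count_formula:
  "sat M \<nu> \<sigma> (count_formula \<alpha> \<beta> e) \<longleftrightarrow>
     of_nat (card {x \<in> univ M. x \<in> \<sigma> (block \<alpha>) \<and> (\<nu> 0, x) \<in> relEntry M \<beta>}) = e"
proof -
  let ?Z = "{x \<in> univ M. x \<in> \<sigma> (block \<alpha>) \<and> (\<nu> 0, x) \<in> relEntry M \<beta>}"
  have "sat M \<nu> \<sigma> (count_formula \<alpha> \<beta> e) \<longleftrightarrow>
      (\<exists>Z \<subseteq> univ M. (\<forall>x\<in>univ M. x \<in> Z \<longleftrightarrow> x \<in> \<sigma> (block \<alpha>) \<and> (\<nu> 0, x) \<in> relEntry M \<beta>) \<and>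
         of_nat (card Z) = e)"
    by (auto simp: count_formula_def sat_card_eq_formula)
  also have "\<dots> \<longleftrightarrow> of_nat (card ?Z) = e"
  proof
    assume "\<exists>Z \<subseteq> univ M. (\<forall>x\<in>univ M. x \<in> Z \<longleftrightarrow> x \<in> \<sigma> (block \<alpha>) \<and> (\<nu> 0, x) \<in> relEntry M \<beta>) \<and>
         of_nat (card Z) = e"
    then obtain Z where "Z \<subseteq> univ M" "Z = ?Z" "of_nat (card Z) = e"
      by blast
    then show "of_nat (card ?Z) = e" by simp
  qed (intro exI[of _ ?Z], auto)
  finally show ?thesis .
qed

definition weighted_entry_count :: "('u, 'f::{finite,semiring_1}) sigma_struct \<Rightarrow> 'u \<Rightarrow> ('f \<Rightarrow> 'u set) \<Rightarrow> 'f" where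
  "weighted_entry_count M r B =
     (\<Sum>\<alpha>\<in>UNIV. \<Sum>\<beta>\<in>UNIV. \<alpha> * \<beta> * of_nat (card {x \<in> univ M. x \<in> B \<alpha> \<and> (r, x) \<in> relEntry M \<beta>}))"

text \<open>
  In row_formula, gs guesses the entries of the virtual columns in the current row and t the
  entry counts, reduced into F.
\<close>

definition row_formula :: "nat \<Rightarrow> 'f::{finite,field} list \<Rightarrow> ('f, 'f svar) cmso" where
  "row_formula k bs =
     Disjs {(gs, t). length gs = k \<and> (\<Sum>\<alpha>\<in>UNIV. \<Sum>\<beta>\<in>UNIV. \<alpha> * \<beta> * t \<alpha> \<beta>) = (\<Sum>i<k. bs ! i * gs ! i)}
       (\<lambda>(gs, t). Conj (Conjs {..<k} (\<lambda>i. AtMem 0 (SY i (gs ! i))))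
                        (Conjs UNIV (\<lambda>(\<alpha>, \<beta>). count_formula \<alpha> \<beta> (t \<alpha> \<beta>))))"

lemma sat_row_formula:
  "sat M \<nu> \<sigma> (row_formula k bs) \<longleftrightarrow>
     (\<exists>gs. length gs = k \<and> (\<forall>i<k. \<nu> 0 \<in> \<sigma> (SY i (gs ! i))) \<and>
        weighted_entry_count M (\<nu> 0) (\<sigma> \<circ> block) = (\<Sum>i<k. bs ! i * gs ! i))"
proof -
  let ?count = "\<lambda>\<alpha> \<beta>. of_nat (card {x \<in> univ M. x \<in> \<sigma> (block \<alpha>) \<and> (\<nu> 0, x) \<in> relEntry M \<beta>})"
  have "finite {(gs, t). length gs = k \<and> (\<Sum>\<alpha>\<in>UNIV. \<Sum>\<beta>\<in>UNIV. \<alpha> * \<beta> * t \<alpha> \<beta>) = (\<Sum>i<k. bs ! i * gs ! i)}"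
    by (rule finite_subset[OF _ finite_cartesian_product[OF finite_lists_length[of k] finite_UNIV]]) auto
  then have "sat M \<nu> \<sigma> (row_formula k bs) \<longleftrightarrow>
      (\<exists>gs t. length gs = k \<and> (\<Sum>\<alpha>\<in>UNIV. \<Sum>\<beta>\<in>UNIV. \<alpha> * \<beta> * t \<alpha> \<beta>) = (\<Sum>i<k. bs ! i * gs ! i) \<and>
         (\<forall>i<k. \<nu> 0 \<in> \<sigma> (SY i (gs ! i))) \<and> (\<forall>\<alpha> \<beta>. ?count \<alpha> \<beta> = t \<alpha> \<beta>))"
    by (simp add: row_formula_def sat_Disjs sat_Conjs sat_count_formula Ball_def)
  also have "\<dots> \<longleftrightarrow> (\<exists>gs t. length gs = k \<and> (\<Sum>\<alpha>\<in>UNIV. \<Sum>\<beta>\<in>UNIV. \<alpha> * \<beta> * t \<alpha> \<beta>) = (\<Sum>i<k. bs ! i * gs ! i) \<and>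
         (\<forall>i<k. \<nu> 0 \<in> \<sigma> (SY i (gs ! i))) \<and> t = ?count)"
    by (simp add: fun_eq_iff eq_commute)
  finally show ?thesis
    by (auto simp: weighted_entry_count_def)
qed

definition rows_formula :: "nat \<Rightarrow> ('f::{finite,field}, 'f svar) cmso" where
  "rows_formula k = Disjs {bs. length bs = k} (\<lambda>bs. All1 0 (Imp (AtR 0) (row_formula k bs)))"

definition combination_in_span ::
    "('u, 'f::{finite,semiring_1}) sigma_struct \<Rightarrow> ('f svar \<Rightarrow> 'u set) \<Rightarrow> nat \<Rightarrow> ('f \<Rightarrow> 'u set) \<Rightarrow> bool" where
  "combination_in_span M \<sigma> k B \<longleftrightarrow>
     (\<exists>bs. length bs = k \<and> (\<forall>r \<in> univ M \<inter> relR M. \<exists>gs. length gs = k \<and>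
        (\<forall>i<k. r \<in> \<sigma> (SY i (gs ! i))) \<and> weighted_entry_count M r B = (\<Sum>i<k. bs ! i * gs ! i)))"

lemma sat_rows_formula:
  "sat M \<nu> \<sigma> (rows_formula k) \<longleftrightarrow> combination_in_span M \<sigma> k (\<sigma> \<circ> block)"
  by (auto simp: rows_formula_def combination_in_span_def sat_Disjs[OF finite_lists_length] sat_row_formula)

definition partition_formula :: "('f::{finite,field}, 'f svar) cmso" where
  "partition_formula =
     Conj (Conjs {(\<alpha>, \<beta>). \<alpha> \<noteq> \<beta>} (\<lambda>(\<alpha>, \<beta>). All1 1 (Neg (Conj (AtMem 1 (block \<alpha>)) (AtMem 1 (block \<beta>))))))
      (All1 1 (Iff (AtMem 1 SX) (Disjs UNIV (\<lambda>\<alpha>. AtMem 1 (block \<alpha>)))))"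

lemma sat_partition_formula:
  assumes "\<And>\<alpha>. \<sigma> (block \<alpha>) \<subseteq> univ M" "\<sigma> SX \<subseteq> univ M"
  shows "sat M \<nu> \<sigma> partition_formula \<longleftrightarrow>
           disjoint_family (\<sigma> \<circ> block) \<and> (\<Union>\<alpha>. \<sigma> (block \<alpha>)) = \<sigma> SX"
  using assms by (simp add: partition_formula_def sat_Conjs sat_Disjs disjoint_family_on_def) blast

definition nontrivial_formula :: "('f::{finite,field}, 'f svar) cmso" where
  "nontrivial_formula = Disjs {\<alpha>. \<alpha> \<noteq> 0} (\<lambda>\<alpha>. Ex1 1 (AtMem 1 (block \<alpha>)))"

lemma sat_nontrivial_formula:
  assumes "\<And>\<alpha>. \<sigma> (block \<alpha>) \<subseteq> univ M"
  shows "sat M \<nu> \<sigma> nontrivial_formula \<longleftrightarrow> (\<exists>\<alpha>. \<alpha> \<noteq> 0 \<and> \<sigma> (block \<alpha>) \<noteq> {})"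
  using assms by (auto simp: nontrivial_formula_def sat_Disjs)

definition dep_formula :: "nat \<Rightarrow> ('f::{finite,field}, 'f svar) cmso" where
  "dep_formula k = ExSs (range block) (Conj partition_formula (Conj nontrivial_formula (rows_formula k)))"

lemma sat_dep_formula_body:
  assumes "\<forall>\<alpha>. B \<alpha> \<subseteq> univ M" "\<sigma> SX \<subseteq> univ M"
  shows "sat M \<nu> (override_on \<sigma> (B \<circ> inv block) (range block))
           (Conj partition_formula (Conj nontrivial_formula (rows_formula k))) \<longleftrightarrow>
         (disjoint_family B \<and> (\<Union>\<alpha>. B \<alpha>) = \<sigma> SX) \<and> (\<exists>\<alpha>. \<alpha> \<noteq> 0 \<and> B \<alpha> \<noteq> {}) \<and>
         combination_in_span M \<sigma> k B"
proof -
  let ?\<sigma> = "override_on \<sigma> (B \<circ> inv block) (range block)"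
  have "\<And>\<alpha>. ?\<sigma> (block \<alpha>) = B \<alpha>" "?\<sigma> \<circ> block = B" "?\<sigma> SX = \<sigma> SX"
    and "\<And>i \<gamma>. ?\<sigma> (SY i \<gamma>) = \<sigma> (SY i \<gamma>)"
    by (auto simp: override_on_def fun_eq_iff inv_f_f[OF inj_block])
  moreover from this(4) have "combination_in_span M ?\<sigma> k B = combination_in_span M \<sigma> k B"
    by (simp add: combination_in_span_def)
  ultimately show ?thesis
    using assms by (simp add: sat_partition_formula sat_nontrivial_formula sat_rows_formula)
qed

lemma sat_dep_formula:
  assumes "\<sigma> SX \<subseteq> univ M"
  shows "sat M \<nu> \<sigma> (dep_formula k) \<longleftrightarrow>
    (\<exists>B :: 'f::{finite,field} \<Rightarrow> _. (disjoint_family B \<and> (\<Union>\<alpha>. B \<alpha>) = \<sigma> SX) \<and>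
       (\<exists>\<alpha>. \<alpha> \<noteq> 0 \<and> B \<alpha> \<noteq> {}) \<and> combination_in_span M \<sigma> k B)"
proof
  assume "sat M \<nu> \<sigma> (dep_formula k)"
  then obtain B :: "'f \<Rightarrow> _" where sub: "\<forall>\<alpha>. B \<alpha> \<subseteq> univ M"
    and "sat M \<nu> (override_on \<sigma> (B \<circ> inv block) (range block))
           (Conj partition_formula (Conj nontrivial_formula (rows_formula k)))"
    unfolding dep_formula_def sat_ExSs_range[OF inj_block] by blast
  then show "\<exists>B. (disjoint_family B \<and> (\<Union>\<alpha>. B \<alpha>) = \<sigma> SX) \<and>
       (\<exists>\<alpha>. \<alpha> \<noteq> 0 \<and> B \<alpha> \<noteq> {}) \<and> combination_in_span M \<sigma> k B"
    unfolding sat_dep_formula_body[where \<sigma> = \<sigma>, OF sub assms] by blast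
next
  assume "\<exists>B :: 'f \<Rightarrow> _. (disjoint_family B \<and> (\<Union>\<alpha>. B \<alpha>) = \<sigma> SX) \<and>
       (\<exists>\<alpha>. \<alpha> \<noteq> 0 \<and> B \<alpha> \<noteq> {}) \<and> combination_in_span M \<sigma> k B"
  then obtain B :: "'f \<Rightarrow> _" where "disjoint_family B" and cover: "(\<Union>\<alpha>. B \<alpha>) = \<sigma> SX"
    and "\<exists>\<alpha>. \<alpha> \<noteq> 0 \<and> B \<alpha> \<noteq> {}" "combination_in_span M \<sigma> k B"
    by blast
  moreover from cover assms have sub: "\<forall>\<alpha>. B \<alpha> \<subseteq> univ M"
    by blast
  ultimately have "sat M \<nu> (override_on \<sigma> (B \<circ> inv block) (range block))
           (Conj partition_formula (Conj nontrivial_formula (rows_formula k)))"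
    unfolding sat_dep_formula_body[where \<sigma> = \<sigma>, OF sub assms] by blast
  with sub show "sat M \<nu> \<sigma> (dep_formula k)"
    unfolding dep_formula_def sat_ExSs_range[OF inj_block] by blast
qed

lemma card_entries_fibre:
  assumes "S \<subseteq> {..<n}" "r < m"
  shows "card {x \<in> univ (matrix_struct m n A). x \<in> Col ` {c \<in> S. a c = \<alpha>} \<and>
                  (Row r, x) \<in> relEntry (matrix_struct m n A) \<beta>} = card {c \<in> S. a c = \<alpha> \<and> A r c = \<beta>}"
proof -
  have "{x \<in> univ (matrix_struct m n A). x \<in> Col ` {c \<in> S. a c = \<alpha>} \<and> (Row r, x) \<in> relEntry (matrix_struct m n A) \<beta>}
      = Col ` {c \<in> S. a c = \<alpha> \<and> A r c = \<beta>}"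
    using assms by (auto simp: matrix_struct_def)
  then show ?thesis
    by (simp add: card_image inj_on_def)
qed

lemma weighted_entry_count_fibres:
  fixes A :: "nat \<Rightarrow> nat \<Rightarrow> 'f::{finite,semiring_1}"
  assumes "S \<subseteq> {..<n}" "r < m"
  shows "weighted_entry_count (matrix_struct m n A) (Row r) (\<lambda>\<alpha>. Col ` {c \<in> S. a c = \<alpha>}) = (\<Sum>c\<in>S. a c * A r c)"
proof -
  have "finite S"
    by (rule finite_subset[OF assms(1)]) simp
  then have "(\<Sum>c\<in>S. a c * A r c) = (\<Sum>z\<in>UNIV. fst z * snd z * of_nat (card {c \<in> S. (a c, A r c) = z}))"
    using sum_by_fibres[of S "\<lambda>z. fst z * snd z" "\<lambda>c. (a c, A r c)"] by simp
  also have "\<dots> = (\<Sum>\<alpha>\<in>UNIV. \<Sum>\<beta>\<in>UNIV. \<alpha> * \<beta> * of_nat (card {c \<in> S. a c = \<alpha> \<and> A r c = \<beta>}))"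
    unfolding sum.cartesian_product UNIV_Times_UNIV by (simp add: case_prod_beta prod_eq_iff)
  finally show ?thesis
    using assms by (simp add: weighted_entry_count_def card_entries_fibre)
qed

lemma sat_dep_formula_matrix_struct:
  fixes A :: "nat \<Rightarrow> nat \<Rightarrow> 'f::{finite,field}"
  assumes "S \<subseteq> {..<n}" "\<sigma> SX = Col ` S"
  shows "sat (matrix_struct m n A) \<nu> \<sigma> (dep_formula k) \<longleftrightarrow>
    (\<exists>a. (\<exists>c\<in>S. a c \<noteq> 0) \<and> (\<exists>bs. length bs = k \<and> (\<forall>r<m. \<exists>gs. length gs = k \<and>
       (\<forall>i<k. Row r \<in> \<sigma> (SY i (gs ! i))) \<and> (\<Sum>c\<in>S. a c * A r c) = (\<Sum>i<k. bs ! i * gs ! i))))"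
    (is "_ \<longleftrightarrow> ?rhs")
proof -
  let ?M = "matrix_struct m n A"
  let ?fibres = "\<lambda>a \<alpha>. Col ` {c \<in> S. a c = \<alpha>}"
  have "\<sigma> SX \<subseteq> univ ?M"
    using assms by (auto simp: matrix_struct_def)
  moreover have "inj_on Col S"
    by (simp add: inj_on_def)
  ultimately have "sat ?M \<nu> \<sigma> (dep_formula k) \<longleftrightarrow>
      (\<exists>a. (\<exists>\<alpha>. \<alpha> \<noteq> 0 \<and> ?fibres a \<alpha> \<noteq> {}) \<and> combination_in_span ?M \<sigma> k (?fibres a))"
    by (simp only: sat_dep_formula assms(2) disjoint_family_Union_eq_image_iff) blast
  also have "\<dots> \<longleftrightarrow> ?rhs"
  proof -
    have nontrivial: "(\<exists>\<alpha>. \<alpha> \<noteq> 0 \<and> ?fibres a \<alpha> \<noteq> {}) \<longleftrightarrow> (\<exists>c\<in>S. a c \<noteq> 0)" for a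
      by auto
    have "univ ?M \<inter> relR ?M = Row ` {..<m}"
      by (auto simp: matrix_struct_def)
    then have combination: "combination_in_span ?M \<sigma> k (?fibres a) \<longleftrightarrow>
        (\<exists>bs. length bs = k \<and> (\<forall>r<m. \<exists>gs. length gs = k \<and>
           (\<forall>i<k. Row r \<in> \<sigma> (SY i (gs ! i))) \<and> (\<Sum>c\<in>S. a c * A r c) = (\<Sum>i<k. bs ! i * gs ! i)))" for a
      using assms(1) by (simp add: combination_in_span_def weighted_entry_count_fibres Ball_image_comp comp_def)
        (simp add: Ball_def)
    show ?thesis
      by (simp only: nontrivial combination)
  qed
  finally show ?thesis .
qed

lemma mem_virtual_column_iff:
  assumes "virtual_column m Q" "r < m"
  shows "Row r \<in> Q \<gamma> \<longleftrightarrow> \<gamma> = vvec Q r"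
proof -
  obtain \<gamma>' where "Row r \<in> Q \<gamma>'"
    using assms unfolding virtual_column_def by blast
  moreover have "Row r \<in> Q \<gamma>'' \<Longrightarrow> \<gamma>'' = \<gamma>'" for \<gamma>''
    using assms(1) \<open>Row r \<in> Q \<gamma>'\<close> unfolding virtual_column_def by blast
  ultimately show ?thesis
    unfolding vvec_def by (metis the_equality)
qed

theorem lemma9:
  fixes k :: nat
  shows "\<exists>Dep :: ('f::{finite,field}, 'f svar) cmso.
    \<forall>(m::nat) (n::nat) (A :: nat \<Rightarrow> nat \<Rightarrow> 'f) (S :: nat set)
      (Q :: nat \<Rightarrow> 'f \<Rightarrow> elem set) (\<nu> :: nat \<Rightarrow> elem) (\<sigma> :: 'f svar \<Rightarrow> elem set).
      S \<subseteq> {..<n} \<and> (\<forall>i<k. virtual_column m (Q i)) \<and>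
      \<sigma> SX = Col ` S \<and> (\<forall>i<k. \<forall>\<alpha>. \<sigma> (SY i \<alpha>) = Q i \<alpha>)
      \<longrightarrow> (dependent_wrt m A S (\<lambda>i. vvec (Q i)) k \<longleftrightarrow> sat (matrix_struct m n A) \<nu> \<sigma> Dep)"
proof (intro exI[of _ "dep_formula k"] allI impI, elim conjE)
  fix m n :: nat and A :: "nat \<Rightarrow> nat \<Rightarrow> 'f" and S and Q :: "nat \<Rightarrow> 'f \<Rightarrow> elem set"
    and \<nu> and \<sigma> :: "'f svar \<Rightarrow> elem set"
  assume "S \<subseteq> {..<n}" "\<sigma> SX = Col ` S" and columns: "\<forall>i<k. virtual_column m (Q i)"
    and "\<forall>i<k. \<forall>\<alpha>. \<sigma> (SY i \<alpha>) = Q i \<alpha>"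
  moreover have "Row r \<in> Q i \<gamma> \<longleftrightarrow> \<gamma> = vvec (Q i) r" if "i < k" "r < m" for i r \<gamma>
    using columns that by (simp add: mem_virtual_column_iff[of m "Q i"])
  ultimately have "sat (matrix_struct m n A) \<nu> \<sigma> (dep_formula k) \<longleftrightarrow>
    (\<exists>a. (\<exists>c\<in>S. a c \<noteq> 0) \<and> (\<exists>b. \<forall>r<m. (\<Sum>c\<in>S. a c * A r c) = (\<Sum>i<k. b i * vvec (Q i) r)))"
    by (simp add: sat_dep_formula_matrix_struct ex_nth_eq_iff_map ex_length_eq_iff_map cong: imp_cong)
  then show "dependent_wrt m A S (\<lambda>i. vvec (Q i)) k \<longleftrightarrow> sat (matrix_struct m n A) \<nu> \<sigma> (dep_formula k)"
    unfolding dependent_wrt_def by blast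
qed

end
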